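(* Let $S$ be the multiset consisting of $2$ copies of each odd positive integer together with $2$ additional copies of each odd positive multiple of $3$, and let $T$ be the multiset consisting of $2$ copies of each even positive integer together with $2$ additional copies of each even positive multiple of $3$ (all copies distinct). Let $D_S(N)$ be the number of partitions of $N$ into distinct elements of $S$ having an odd number of parts, and $D_T(N)$ the number of partitions of $N$ into distinct elements of $T$. Then for every $N\ge 1$, $D_S(N)=2D_T(N-1)$.
   Context: A partition of $N$ into distinct elements of a multiset is a finite set of distinct elements of it (different copies of the same integer count as distinct elements) whose values sum to $N$. $D_T(0)=1$. *)

theory Defs
  imports Main
begin

(* A multiset of positive integers is represented by its set of labelled copies:
   the pair (n, c) is the c-th copy of the integer n. *)

definition mult3 :: "nat \<Rightarrow> nat" where
  "mult3 n = (if 3 dvd n then 4 else 2)"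

definition S_elems :: "(nat \<times> nat) set" where
  "S_elems = {(n, c). n > 0 \<and> odd n \<and> c < mult3 n}"

definition T_elems :: "(nat \<times> nat) set" where
  "T_elems = {(n, c). n > 0 \<and> even n \<and> c < mult3 n}"

definition distinct_partitions :: "(nat \<times> nat) set \<Rightarrow> nat \<Rightarrow> (nat \<times> nat) set set" where
  "distinct_partitions M N = {P. P \<subseteq> M \<and> finite P \<and> (\<Sum>x\<in>P. fst x) = N}"

definition D_S :: "nat \<Rightarrow> nat" where
  "D_S N = card {P \<in> distinct_partitions S_elems N. odd (card P)}"

definition D_T :: "nat \<Rightarrow> nat" where
  "D_T N = card (distinct_partitions T_elems N)"

end

theory Submission imports Defs begin

(* A partition into distinct copies of S (resp. T) is the same as a pair (p1, p2) of
   "bipartitions" p = (U, V) -- two finite sets of odd (resp. even) positive integers -- with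
   weight p1 + 3 * weight p2 = N: p1 collects the copies 0, 1 of each part, p2 the thirds of the
   extra copies 2, 3 of multiples of 3.
   For odd bipartitions the charge |U| - |V| and a shift map give a bijection
   p <-> (charge p, normal form of charge 0), with weight p = weight (normal form) + charge^2
   (a combinatorial Jacobi triple product).  For odd N every S-partition has an odd number of
   parts, neutral bipartitions have even weight, and the quadratic-form identity
   (j + 3k)^2 + 3 (j - k)^2 = 4 (j^2 + 3 k^2) matches charges (j, k) with j + k odd, two-to-one,
   against pairs (a, c) with a^2 + a + 3 (c^2 + c) = j^2 + 3k^2 - 1.  Hence twice the number of
   S-partitions of N counts pairs of odd bipartitions of energy (weight + charge) N - 1, and
   subtracting 1 from U and adding 1 to V turns those into even bipartitions, four to one. *)

lemma card_preimage_bij: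
  assumes "bij_betw f A B" "T \<subseteq> B"
  shows "card {x \<in> A. f x \<in> T} = card T"
proof -
  have "bij_betw f {x \<in> A. f x \<in> T} {y \<in> B. y \<in> T}"
    by (rule bij_betw_Collect[OF assms(1)]) simp
  moreover have "{y \<in> B. y \<in> T} = T" using assms(2) by blast
  ultimately show ?thesis by (simp add: bij_betw_same_card)
qed

lemma sum_of_odd_parity:
  fixes f :: "'a \<Rightarrow> nat"
  assumes "finite A" "\<forall>x\<in>A. odd (f x)"
  shows "even (sum f A) = even (card A)"
proof -
  have "{x \<in> A. odd (f x)} = A" using assms(2) by blast
  then show ?thesis using even_sum_iff[OF assms(1), of f] by simp
qed

lemma translate_up:
  assumes "finite U"
  shows "card ((+) k ` U) = card U" "\<Sum>((+) k ` U) = \<Sum>U + k * card U"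
proof -
  have inj: "inj_on ((+) k) U" by simp
  show "card ((+) k ` U) = card U" using card_image[OF inj] .
  have "\<Sum>((+) k ` U) = (\<Sum>u\<in>U. k + u)" by (simp add: sum.reindex[OF inj])
  then show "\<Sum>((+) k ` U) = \<Sum>U + k * card U" by (simp add: sum.distrib)
qed

lemma translate_down:
  assumes "finite W" "\<forall>w\<in>W. k \<le> w"
  shows "card ((\<lambda>w. w - k) ` W) = card W" "\<Sum>((\<lambda>w. w - k) ` W) + k * card W = \<Sum>W"
proof -
  have inj: "inj_on (\<lambda>w. w - k) W" using assms(2) by (auto simp: inj_on_def) (metis le_add_diff_inverse2)
  show "card ((\<lambda>w. w - k) ` W) = card W" using card_image[OF inj] .
  have "\<Sum>((\<lambda>w. w - k) ` W) + k * card W = (\<Sum>w\<in>W. (w - k) + k)"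
    by (simp add: sum.reindex[OF inj] sum.distrib)
  also have "\<dots> = \<Sum>W" using assms(2) by (intro sum.cong) auto
  finally show "\<Sum>((\<lambda>w. w - k) ` W) + k * card W = \<Sum>W" .
qed

lemma translate_down_up:
  assumes "\<forall>w\<in>W. k \<le> w"
  shows "(+) k ` (\<lambda>w. w - k) ` W = (W :: nat set)"
  using assms by (force simp: image_image)

section \<open>Bipartitions, charge and weight\<close>

definition bipartitions :: "(nat \<Rightarrow> bool) \<Rightarrow> (nat set \<times> nat set) set" where
  "bipartitions P = {(U, V). finite U \<and> finite V \<and> (\<forall>u\<in>U. 0 < u \<and> P u) \<and> (\<forall>v\<in>V. 0 < v \<and> P v)}"

definition charge :: "nat set \<times> nat set \<Rightarrow> int" where
  "charge p = int (card (fst p)) - int (card (snd p))"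

definition weight :: "nat set \<times> nat set \<Rightarrow> nat" where
  "weight p = \<Sum>(fst p) + \<Sum>(snd p)"

text \<open>Pairs of bipartitions of total weight \<open>n\<close>, the second one counted three times;
  they will encode partitions into distinct labelled copies.\<close>

definition weighted_pairs :: "(nat \<Rightarrow> bool) \<Rightarrow> nat \<Rightarrow> ((nat set \<times> nat set) \<times> (nat set \<times> nat set)) set" where
  "weighted_pairs P n = {(p1, p2) \<in> bipartitions P \<times> bipartitions P. weight p1 + 3 * weight p2 = n}"

lemma bipartitions_swap [simp]: "prod.swap p \<in> bipartitions P \<longleftrightarrow> p \<in> bipartitions P"
  by (cases p) (auto simp: bipartitions_def)

section \<open>The shift of odd bipartitions\<close>

definition shift :: "nat set \<times> nat set \<Rightarrow> nat set \<times> nat set" where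
  "shift p = (if 1 \<in> snd p then ((+) 2 ` fst p, (\<lambda>v. v - 2) ` (snd p - {1}))
              else (insert 1 ((+) 2 ` fst p), (\<lambda>v. v - 2) ` snd p))"

definition unshift :: "nat set \<times> nat set \<Rightarrow> nat set \<times> nat set" where
  "unshift p = prod.swap (shift (prod.swap p))"

lemma odd_gt_one: "odd (v::nat) \<Longrightarrow> 0 < v \<Longrightarrow> v \<noteq> 1 \<Longrightarrow> 2 \<le> v \<and> 0 < v - 2 \<and> odd (v - 2)"
  by presburger

lemma shift_bipartition:
  assumes "p \<in> bipartitions odd"
  shows "shift p \<in> bipartitions odd"
proof -
  obtain U V where UV: "p = (U, V)" "finite U" "finite V"
    "\<forall>u\<in>U. 0 < u \<and> odd u" "\<forall>v\<in>V. 0 < v \<and> odd v"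
    using assms by (cases p) (auto simp: bipartitions_def)
  have up: "\<forall>u\<in>(+) 2 ` U. 0 < u \<and> odd u" using UV(4) by auto
  have down: "\<forall>v\<in>(\<lambda>v. v - 2) ` (V - {1}). 0 < v \<and> odd v"
    using UV(5) odd_gt_one by blast
  show ?thesis
  proof (cases "1 \<in> V")
    case True
    then show ?thesis using UV up down by (simp add: shift_def bipartitions_def)
  next
    case False
    then have "V - {1} = V" by blast
    then show ?thesis using False UV up down by (simp add: shift_def bipartitions_def)
  qed
qed

lemma shift_charge_weight:
  assumes p: "p \<in> bipartitions odd"
  shows "charge (shift p) = charge p + 1"
    and "int (weight (shift p)) = int (weight p) + 2 * charge p + 1"
proof -
  obtain U V where UV: "p = (U, V)" "finite U" "finite V" "\<forall>v\<in>V. 0 < v \<and> odd v"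
    using p by (cases p) (auto simp: bipartitions_def)
  have big: "\<forall>v\<in>V - {1}. 2 \<le> v" using UV(4) odd_gt_one by blast
  have "charge (shift p) = charge p + 1
      \<and> int (weight (shift p)) = int (weight p) + 2 * charge p + 1"
  proof (cases "1 \<in> V")
    case True
    let ?V = "V - {1}"
    have V: "card V = Suc (card ?V)" "\<Sum>V = 1 + \<Sum>?V"
      using card_Suc_Diff1[OF UV(3) True] sum.remove[OF UV(3) True, of id] by simp_all
    have sh: "shift (U, V) = ((+) 2 ` U, (\<lambda>v. v - 2) ` ?V)" using True by (simp add: shift_def)
    note up = translate_up[OF UV(2), of 2] and down = translate_down[of ?V 2]
    show ?thesis using V up down big UV(3) unfolding UV(1) sh charge_def weight_def by (simp del: of_nat_sum)
  next
    case False
    have sh: "shift (U, V) = (insert 1 ((+) 2 ` U), (\<lambda>v. v - 2) ` V)"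
      using False by (simp add: shift_def)
    note up = translate_up[OF UV(2), of 2] and down = translate_down[OF UV(3), of 2]
    have "1 \<notin> (+) 2 ` U" "finite ((+) 2 ` U)" using UV(2) by auto
    then have ins: "card (insert 1 ((+) 2 ` U)) = Suc (card U)"
      "\<Sum>(insert 1 ((+) 2 ` U)) = 1 + \<Sum>U + 2 * card U"
      using up by simp_all
    show ?thesis using False ins down big unfolding UV(1) sh charge_def weight_def by (simp del: of_nat_sum)
  qed
  then show "charge (shift p) = charge p + 1"
    and "int (weight (shift p)) = int (weight p) + 2 * charge p + 1" by auto
qed

lemma unshift_shift:
  assumes p: "p \<in> bipartitions odd"
  shows "unshift (shift p) = p"
proof -
  obtain U V where UV: "p = (U, V)" "\<forall>v\<in>V. 0 < v \<and> odd v"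
    using p by (cases p) (auto simp: bipartitions_def)
  have big: "\<forall>v\<in>V - {1}. 2 \<le> v" using UV(2) odd_gt_one by blast
  have not_one: "1 \<notin> (+) 2 ` U" by auto
  show ?thesis
  proof (cases "1 \<in> V")
    case True
    then have "insert 1 (V - {1}) = V" by blast
    then show ?thesis
      using True not_one translate_down_up[OF big] unfolding UV(1)
      by (simp add: shift_def unshift_def image_image)
  next
    case False
    then have "\<forall>v\<in>V. 2 \<le> v" using big by blast
    moreover have "insert 1 ((+) 2 ` U) - {1} = (+) 2 ` U" using not_one by blast
    ultimately show ?thesis
      using False not_one translate_down_up[of V 2] unfolding UV(1)
      by (simp add: shift_def unshift_def image_image)
  qed
qed

lemma unshift_bipartition: "p \<in> bipartitions odd \<Longrightarrow> unshift p \<in> bipartitions odd"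
  unfolding unshift_def using shift_bipartition bipartitions_swap by blast

lemma shift_unshift:
  assumes "p \<in> bipartitions odd"
  shows "shift (unshift p) = p"
proof -
  have "unshift (shift (prod.swap p)) = prod.swap p"
    using assms by (simp add: unshift_shift)
  then show ?thesis unfolding unshift_def by (metis swap_swap)
qed

lemma unshift_charge_weight:
  assumes p: "p \<in> bipartitions odd"
  shows "charge (unshift p) = charge p - 1"
    and "int (weight (unshift p)) = int (weight p) - 2 * charge p + 1"
  using shift_charge_weight[OF unshift_bipartition[OF p]] shift_unshift[OF p] by auto

section \<open>Iterated shifts and the normal form\<close>

lemma iterate_charge_weight:
  fixes d :: int
  assumes d: "d\<^sup>2 = 1"
    and step: "\<And>p. p \<in> A \<Longrightarrow> f p \<in> A \<and> charge (f p) = charge p + d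
                  \<and> int (weight (f p)) = int (weight p) + 2 * d * charge p + 1"
    and p: "p \<in> A"
  shows "(f ^^ n) p \<in> A \<and> charge ((f ^^ n) p) = charge p + d * int n
       \<and> int (weight ((f ^^ n) p)) = int (weight p) + 2 * d * int n * charge p + int n ^ 2"
proof (induction n)
  case 0
  then show ?case using p by simp
next
  case (Suc n)
  then have "d * d * int n = int n" using d by (simp add: power2_eq_square)
  then show ?case using Suc step[of "(f ^^ n) p"] by (simp add: algebra_simps power2_eq_square)
qed

lemma iterate_inverse:
  assumes "\<And>p. p \<in> A \<Longrightarrow> f p \<in> A \<and> g (f p) = p" and "p \<in> A"
  shows "(g ^^ n) ((f ^^ n) p) = p"
  using assms(2)
proof (induction n arbitrary: p)
  case 0
  then show ?case by simp
next
  case (Suc n)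
  have "(g ^^ Suc n) ((f ^^ Suc n) p) = g ((g ^^ n) ((f ^^ n) (f p)))"
    by (simp add: funpow_swap1)
  then show ?case using Suc assms(1) by simp
qed

definition shift_by :: "int \<Rightarrow> nat set \<times> nat set \<Rightarrow> nat set \<times> nat set" where
  "shift_by j = (if 0 \<le> j then shift ^^ nat j else unshift ^^ nat (- j))"

lemma shift_by:
  assumes p: "p \<in> bipartitions odd"
  shows "shift_by j p \<in> bipartitions odd" "charge (shift_by j p) = charge p + j"
    and "int (weight (shift_by j p)) = int (weight p) + 2 * j * charge p + j\<^sup>2"
  using iterate_charge_weight[of 1 "bipartitions odd" shift, OF _ _ p, of "nat j"]
    iterate_charge_weight[of "- 1" "bipartitions odd" unshift, OF _ _ p, of "nat (- j)"]
    shift_bipartition shift_charge_weight unshift_bipartition unshift_charge_weight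
  by (auto simp: shift_by_def)

lemma shift_by_inverse:
  assumes p: "p \<in> bipartitions odd"
  shows "shift_by j (shift_by (- j) p) = p"
  using iterate_inverse[of "bipartitions odd" shift unshift, OF _ p]
    iterate_inverse[of "bipartitions odd" unshift shift, OF _ p]
    shift_bipartition unshift_shift unshift_bipartition shift_unshift
  by (cases "j = 0") (auto simp: shift_by_def)

definition normal_form :: "nat set \<times> nat set \<Rightarrow> nat set \<times> nat set" where
  "normal_form p = shift_by (- charge p) p"

definition neutral :: "(nat set \<times> nat set) set" where
  "neutral = {q \<in> bipartitions odd. charge q = 0}"

lemma normal_form:
  assumes p: "p \<in> bipartitions odd"
  shows "normal_form p \<in> neutral" "shift_by (charge p) (normal_form p) = p"
    and "int (weight p) = int (weight (normal_form p)) + (charge p)\<^sup>2"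
  using shift_by[OF p, of "- charge p"] shift_by_inverse[OF p, of "charge p"]
  by (auto simp: normal_form_def neutral_def power2_eq_square)

lemma normal_form_shift_by:
  assumes q: "q \<in> neutral"
  shows "normal_form (shift_by j q) = q" "charge (shift_by j q) = j"
proof -
  have q': "q \<in> bipartitions odd" "charge q = 0" using q by (auto simp: neutral_def)
  show c: "charge (shift_by j q) = j" using shift_by(2)[OF q'(1)] q'(2) by simp
  show "normal_form (shift_by j q) = q"
    unfolding normal_form_def c using shift_by_inverse[OF q'(1), of "- j"] by simp
qed

lemma charge_decomposition:
  "bij_betw (\<lambda>(p1, p2). ((charge p1, charge p2), (normal_form p1, normal_form p2)))
     (bipartitions odd \<times> bipartitions odd) (UNIV \<times> (neutral \<times> neutral))"
proof (rule bij_betw_byWitness[where f' = "\<lambda>((j, k), (q1, q2)). (shift_by j q1, shift_by k q2)"])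
  have "q \<in> neutral \<Longrightarrow> shift_by j q \<in> bipartitions odd" for q j
    using shift_by(1) by (auto simp: neutral_def)
  then show "(\<lambda>((j, k), (q1, q2)). (shift_by j q1, shift_by k q2)) ` (UNIV \<times> (neutral \<times> neutral))
      \<subseteq> bipartitions odd \<times> bipartitions odd" by auto
qed (auto simp: normal_form normal_form_shift_by)

text \<open>A neutral odd bipartition has an even number of odd parts, hence even weight.\<close>

lemma neutral_weight_even:
  assumes "q \<in> neutral"
  shows "even (weight q)"
proof -
  obtain U V where UV: "q = (U, V)" "finite U" "finite V" "\<forall>u\<in>U. odd u" "\<forall>v\<in>V. odd v"
    "card U = card V"
    using assms by (cases q) (auto simp: neutral_def bipartitions_def charge_def)
  have "even (\<Sum>U) = even (card U)" "even (\<Sum>V) = even (card V)"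
    using sum_of_odd_parity[of U id] sum_of_odd_parity[of V id] UV(2-5) by simp_all
  then show ?thesis using UV(1,6) by (simp add: weight_def)
qed

section \<open>An arithmetic doubling\<close>

text \<open>For \<open>j + k\<close> odd put \<open>X = j + 3k\<close> and \<open>Y = \<plusminus>(j - k)\<close>; both are odd and
  \<open>X\<^sup>2 + 3Y\<^sup>2 = 4(j\<^sup>2 + 3k\<^sup>2)\<close>.  Writing \<open>X = 2a + 1\<close>, \<open>Y = 2c + 1\<close> turns a representation
  \<open>j\<^sup>2 + 3k\<^sup>2\<close> together with a sign \<open>b\<close> into a representation \<open>a\<^sup>2 + a + 3(c\<^sup>2 + c)\<close> of the
  number one less, and this is a bijection.\<close>

definition rep_map :: "bool \<Rightarrow> int \<Rightarrow> int \<Rightarrow> int \<times> int" where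
  "rep_map b j k = ((j + 3 * k - 1) div 2, ((if b then k - j else j - k) - 1) div 2)"

definition rep_unmap :: "int \<times> int \<Rightarrow> bool \<times> int \<times> int" where
  "rep_unmap ac = (let X = 2 * fst ac + 1; Y = 2 * snd ac + 1 in
     if 4 dvd (X - Y) then (False, X - 3 * ((X - Y) div 4), (X - Y) div 4)
     else (True, X - 3 * ((X + Y) div 4), (X + Y) div 4))"

lemma rep_map_bij: "bij_betw (\<lambda>(b, j, k). rep_map b j k) {(b, j, k). odd (j + k)} UNIV"
proof (rule bij_betw_byWitness[where f' = rep_unmap])
  show "\<forall>x\<in>{(b, j, k). odd (j + k)}. rep_unmap (case x of (b, j, k) \<Rightarrow> rep_map b j k) = x"
    unfolding rep_unmap_def rep_map_def Let_def by (clarsimp; cases; simp; presburger)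
  show "\<forall>y\<in>UNIV. (case rep_unmap y of (b, j, k) \<Rightarrow> rep_map b j k) = y"
    unfolding rep_unmap_def rep_map_def Let_def by (auto; presburger)
  show "rep_unmap ` UNIV \<subseteq> {(b, j, k). odd (j + k)}"
    unfolding rep_unmap_def Let_def by (auto; presburger)
qed simp

lemma rep_map_norm:
  assumes "odd (j + k)" "rep_map b j k = (a, c)"
  shows "a\<^sup>2 + a + 3 * (c\<^sup>2 + c) = j\<^sup>2 + 3 * k\<^sup>2 - 1"
proof -
  define Y where "Y = (if b then k - j else j - k)"
  have X: "2 * a + 1 = j + 3 * k" using assms unfolding rep_map_def by (auto; presburger)
  have Y: "2 * c + 1 = Y" using assms unfolding rep_map_def Y_def by (cases b; simp; presburger)
  have "4 * (a\<^sup>2 + a + 3 * (c\<^sup>2 + c)) + 4 = (2 * a + 1)\<^sup>2 + 3 * (2 * c + 1)\<^sup>2"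
    by (simp add: power2_eq_square algebra_simps)
  also have "\<dots> = (j + 3 * k)\<^sup>2 + 3 * (j - k)\<^sup>2"
    unfolding X Y Y_def by (simp add: power2_eq_square algebra_simps)
  also have "\<dots> = 4 * (j\<^sup>2 + 3 * k\<^sup>2)" by (simp add: power2_eq_square algebra_simps)
  finally show ?thesis by simp
qed

text \<open>Applied to pairs of neutral bipartitions: since neutral bipartitions have even weight,
  an odd total forces \<open>j + k\<close> to be odd, so the sign \<open>b\<close> doubles the count.\<close>

lemma neutral_representations_doubling:
  fixes N :: int
  assumes N: "odd N"
  shows "2 * card {((j, k), (q1, q2)) \<in> UNIV \<times> (neutral \<times> neutral).
                    int (weight q1) + j\<^sup>2 + 3 * (int (weight q2) + k\<^sup>2) = N}
       = card {((a, c), (q1, q2)) \<in> UNIV \<times> (neutral \<times> neutral).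
                    int (weight q1) + (a\<^sup>2 + a) + 3 * (int (weight q2) + (c\<^sup>2 + c)) = N - 1}"
    (is "2 * card ?S = card ?T")
proof -
  let ?D = "{(j, k). odd (j + k)} \<times> (UNIV :: ((nat set \<times> nat set) \<times> _) set)"
  let ?F = "\<lambda>(b, (j, k), qs). (rep_map b j k, qs)"
  have F: "map_prod (\<lambda>(b, j, k). rep_map b j k) id \<circ> (\<lambda>(b, jk, qs). ((b, jk), qs)) = ?F"
    by auto
  have bij: "bij_betw ?F (UNIV \<times> ?D) UNIV"
    unfolding F[symmetric]
  proof (rule bij_betw_trans)
    show "bij_betw (\<lambda>(b, jk, qs). ((b, jk), qs)) (UNIV \<times> ?D) ({(b, j, k). odd (j + k)} \<times> UNIV)"
      by (rule bij_betw_byWitness[where f' = "\<lambda>((b, jk), qs). (b, jk, qs)"]) auto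
    show "bij_betw (map_prod (\<lambda>(b, j, k). rep_map b j k) id) ({(b, j, k). odd (j + k)} \<times> UNIV) UNIV"
      using bij_betw_map_prod[OF rep_map_bij bij_betw_id[of UNIV]] by simp
  qed
  have odd_sum: "odd (j + k)" if "((j, k), (q1, q2)) \<in> ?S" for j k q1 q2
  proof -
    have "even (int (weight q1))" "even (int (weight q2))"
      using that neutral_weight_even by auto
    moreover have "j\<^sup>2 + 3 * k\<^sup>2 = N - int (weight q1) - 3 * int (weight q2)"
      using that by simp
    ultimately have "odd (j\<^sup>2 + 3 * k\<^sup>2)" using N by presburger
    then show ?thesis by simp
  qed
  have preimage: "{x \<in> UNIV \<times> ?D. ?F x \<in> ?T} = UNIV \<times> ?S"
  proof (rule set_eqI)
    fix x :: "bool \<times> (int \<times> int) \<times> (nat set \<times> nat set) \<times> (nat set \<times> nat set)"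
    obtain b j k q1 q2 where x: "x = (b, (j, k), (q1, q2))" by (metis prod.exhaust)
    obtain a c where ac: "rep_map b j k = (a, c)" by fastforce
    have "odd (j + k) \<Longrightarrow> a\<^sup>2 + a + 3 * (c\<^sup>2 + c) = j\<^sup>2 + 3 * k\<^sup>2 - 1"
      using rep_map_norm ac by blast
    then show "x \<in> {x \<in> UNIV \<times> ?D. ?F x \<in> ?T} \<longleftrightarrow> x \<in> UNIV \<times> ?S"
      using odd_sum[of j k q1 q2] unfolding x by (auto simp: ac algebra_simps)
  qed
  have "card {x \<in> UNIV \<times> ?D. ?F x \<in> ?T} = card ?T"
    by (rule card_preimage_bij[OF bij subset_UNIV])
  then have "card ((UNIV :: bool set) \<times> ?S) = card ?T" unfolding preimage .
  then show ?thesis by (simp add: card_cartesian_product)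
qed

section \<open>From odd to even bipartitions\<close>

definition energy :: "nat set \<times> nat set \<Rightarrow> int" where
  "energy p = int (weight p) + charge p"

definition lift :: "bool \<Rightarrow> nat set \<times> nat set \<Rightarrow> nat set \<times> nat set" where
  "lift b a = ((\<lambda>u. u - 1) ` fst a, (if b then insert 1 ((+) 1 ` snd a) else (+) 1 ` snd a))"

definition lower :: "nat set \<times> nat set \<Rightarrow> nat set \<times> nat set" where
  "lower p = ((+) 1 ` fst p, (\<lambda>v. v - 1) ` (snd p - {1}))"

lemma lift:
  assumes a: "a \<in> bipartitions even"
  shows "lift b a \<in> bipartitions odd" "1 \<in> snd (lift b a) \<longleftrightarrow> b"
    and "lower (lift b a) = a" "energy (lift b a) = int (weight a)"
proof -
  obtain A B where AB: "a = (A, B)" "finite A" "finite B"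
    "\<forall>u\<in>A. 0 < u \<and> even u" "\<forall>v\<in>B. 0 < v \<and> even v"
    using a by (cases a) (auto simp: bipartitions_def)
  have A1: "\<forall>u\<in>A. 1 \<le> u" using AB(4) by auto
  have "\<forall>x\<in>(\<lambda>u. u - 1) ` A. 0 < x \<and> odd x"
    using AB(4) by (auto elim!: evenE simp: Suc_le_eq)
  moreover have "\<forall>x\<in>(+) 1 ` B. 0 < x \<and> odd x" using AB(5) by auto
  ultimately show "lift b a \<in> bipartitions odd"
    using AB(1-3) by (auto simp: lift_def bipartitions_def)
  have not_one: "1 \<notin> (+) 1 ` B" using AB(5) by auto
  then show "1 \<in> snd (lift b a) \<longleftrightarrow> b" using AB(1) by (simp add: lift_def)
  have "insert 1 ((+) 1 ` B) - {1} = (+) 1 ` B" "(+) 1 ` B - {1} = (+) 1 ` B"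
    using not_one by auto
  then show "lower (lift b a) = a"
    using AB(1) translate_down_up[OF A1] by (simp add: lift_def lower_def image_image)
  note down = translate_down[OF AB(2) A1] and up = translate_up[OF AB(3), of 1]
  have "finite ((+) 1 ` B)" using AB(3) by simp
  then show "energy (lift b a) = int (weight a)"
    using down up not_one AB(1) by (cases b) (simp_all add: lift_def energy_def weight_def charge_def del: of_nat_sum)
qed

lemma lower:
  assumes p: "p \<in> bipartitions odd"
  shows "lower p \<in> bipartitions even" "lift (1 \<in> snd p) (lower p) = p"
proof -
  obtain U V where UV: "p = (U, V)" "finite U" "finite V"
    "\<forall>u\<in>U. 0 < u \<and> odd u" "\<forall>v\<in>V. 0 < v \<and> odd v"
    using p by (cases p) (auto simp: bipartitions_def)
  have V1: "\<forall>v\<in>V - {1}. 1 \<le> v" using UV(5) by (simp add: Suc_le_eq)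
  have "\<forall>x\<in>(\<lambda>v. v - 1) ` (V - {1}). 0 < x \<and> even x"
  proof
    fix x assume "x \<in> (\<lambda>v. v - 1) ` (V - {1})"
    then obtain v where v: "v \<in> V" "v \<noteq> 1" "x = v - 1" by blast
    then have "0 < v" "odd v" using UV(5) by auto
    then show "0 < x \<and> even x" using v(2,3) by presburger
  qed
  moreover have "\<forall>x\<in>(+) 1 ` U. 0 < x \<and> even x" using UV(4) by auto
  ultimately show "lower p \<in> bipartitions even"
    using UV(1-3) unfolding lower_def bipartitions_def by simp
  have "(\<lambda>u. u - 1) ` (+) 1 ` U = U" by (simp add: image_image)
  then show "lift (1 \<in> snd p) (lower p) = p"
    using UV(1) translate_down_up[OF V1] by (cases "1 \<in> V") (auto simp: lift_def lower_def)
qed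

lemma lift_pairs_bij:
  "bij_betw (\<lambda>(b1, b2, a1, a2). (lift b1 a1, lift b2 a2))
     (UNIV \<times> UNIV \<times> (bipartitions even \<times> bipartitions even)) (bipartitions odd \<times> bipartitions odd)"
  by (rule bij_betw_byWitness[where f' = "\<lambda>(p1, p2). (1 \<in> snd p1, 1 \<in> snd p2, lower p1, lower p2)"])
    (auto simp: lift[simplified] lower[simplified])

lemma energy_pairs_count:
  "card {(p1, p2) \<in> bipartitions odd \<times> bipartitions odd. energy p1 + 3 * energy p2 = int n}
     = 4 * card (weighted_pairs even n)"
proof -
  let ?T = "{(p1, p2) \<in> bipartitions odd \<times> bipartitions odd. energy p1 + 3 * energy p2 = int n}"
  let ?F = "\<lambda>(b1, b2, a1, a2). (lift b1 a1, lift b2 a2)"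
  have "{x \<in> UNIV \<times> UNIV \<times> (bipartitions even \<times> bipartitions even). ?F x \<in> ?T}
      = UNIV \<times> UNIV \<times> weighted_pairs even n"
    by (auto simp: lift weighted_pairs_def simp del: of_nat_add of_nat_mult)
  moreover have "card {x \<in> UNIV \<times> UNIV \<times> (bipartitions even \<times> bipartitions even). ?F x \<in> ?T}
      = card ?T"
    by (rule card_preimage_bij[OF lift_pairs_bij]) auto
  ultimately show ?thesis by (simp add: card_cartesian_product)
qed

section \<open>Partitions into labelled copies as pairs of bipartitions\<close>

text \<open>The multiset with copies \<open>0, 1\<close> of every positive \<open>n\<close> satisfying \<open>P\<close> and two more copies
  \<open>2, 3\<close> of each such multiple of 3.  A finite set of copies is encoded by the bipartition
  formed by copies \<open>0, 1\<close> and the bipartition of the thirds of copies \<open>2, 3\<close>.\<close>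

definition copies :: "(nat \<Rightarrow> bool) \<Rightarrow> (nat \<times> nat) set" where
  "copies P = {(n, c). 0 < n \<and> P n \<and> c < mult3 n}"

definition encode :: "(nat set \<times> nat set) \<times> (nat set \<times> nat set) \<Rightarrow> (nat \<times> nat) set" where
  "encode pp = (\<lambda>u. (u, 0)) ` fst (fst pp) \<union> (\<lambda>u. (u, 1)) ` snd (fst pp)
             \<union> (\<lambda>u. (3 * u, 2)) ` fst (snd pp) \<union> (\<lambda>u. (3 * u, 3)) ` snd (snd pp)"

definition decode :: "(nat \<times> nat) set \<Rightarrow> (nat set \<times> nat set) \<times> (nat set \<times> nat set)" where
  "decode Q = (({n. (n, 0) \<in> Q}, {n. (n, 1) \<in> Q}), ({n. (3 * n, 2) \<in> Q}, {n. (3 * n, 3) \<in> Q}))"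

lemma sum_encode:
  assumes "finite U1" "finite V1" "finite U2" "finite V2"
  shows "(\<Sum>x\<in>encode ((U1, V1), (U2, V2)). fst x) = weight (U1, V1) + 3 * weight (U2, V2)"
proof -
  let ?A = "(\<lambda>u. (u, 0::nat)) ` U1" and ?B = "(\<lambda>u. (u, 1::nat)) ` V1"
  let ?C = "(\<lambda>u. (3 * u, 2::nat)) ` U2" and ?D = "(\<lambda>u. (3 * u, 3::nat)) ` V2"
  have fin: "finite ?A" "finite ?B" "finite ?C" "finite ?D" using assms by auto
  have "(\<Sum>x\<in>?A \<union> ?B \<union> ?C \<union> ?D. fst x)
      = (\<Sum>x\<in>?A. fst x) + (\<Sum>x\<in>?B. fst x) + (\<Sum>x\<in>?C. fst x) + (\<Sum>x\<in>?D. fst x)"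
    using fin by (subst sum.union_disjoint; auto)+
  also have "\<dots> = \<Sum>U1 + \<Sum>V1 + 3 * \<Sum>U2 + 3 * \<Sum>V2"
    by (subst (1 2 3 4) sum.reindex) (auto simp: inj_on_def sum_distrib_left)
  finally show ?thesis by (simp add: encode_def weight_def)
qed

lemma encode_bij:
  assumes P3: "\<And>n. P (3 * n) = P n"
  shows "bij_betw encode (bipartitions P \<times> bipartitions P) {Q. Q \<subseteq> copies P \<and> finite Q}"
proof (rule bij_betw_byWitness[where f' = decode])
  show "\<forall>x\<in>bipartitions P \<times> bipartitions P. decode (encode x) = x"
    by (auto simp: decode_def encode_def)
  show "encode ` (bipartitions P \<times> bipartitions P) \<subseteq> {Q. Q \<subseteq> copies P \<and> finite Q}"
    using P3 by (auto simp: encode_def bipartitions_def copies_def mult3_def)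
  show "\<forall>Q\<in>{Q. Q \<subseteq> copies P \<and> finite Q}. encode (decode Q) = Q"
  proof (intro ballI set_eqI)
    fix Q and x :: "nat \<times> nat"
    assume "Q \<in> {Q. Q \<subseteq> copies P \<and> finite Q}"
    then have Q: "Q \<subseteq> copies P" by blast
    obtain n c where x: "x = (n, c)" by fastforce
    have "x \<in> Q \<Longrightarrow> c = 0 \<or> c = 1 \<or> (c \<in> {2, 3} \<and> n = 3 * (n div 3))"
      using Q unfolding x by (auto simp: copies_def mult3_def split: if_splits)
    then show "x \<in> encode (decode Q) \<longleftrightarrow> x \<in> Q"
      unfolding x encode_def decode_def by (auto simp: image_iff) metis+
  qed
  show "decode ` {Q. Q \<subseteq> copies P \<and> finite Q} \<subseteq> bipartitions P \<times> bipartitions P"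
  proof (rule image_subsetI)
    fix Q assume "Q \<in> {Q. Q \<subseteq> copies P \<and> finite Q}"
    then have Q: "Q \<subseteq> copies P" "finite Q" by auto
    have "finite {n. (f n, c) \<in> Q}" if "inj f" for f :: "nat \<Rightarrow> nat" and c :: nat
      using finite_vimageI[OF Q(2), of "\<lambda>n. (f n, c)"] that by (simp add: inj_def vimage_def)
    from this[of id] this[of "(*) 3"] show "decode Q \<in> bipartitions P \<times> bipartitions P"
      using Q(1) P3 by (auto simp: decode_def bipartitions_def copies_def inj_def)
  qed
qed

lemma partitions_count:
  assumes P3: "\<And>n. P (3 * n) = P n"
  shows "card (distinct_partitions (copies P) N) = card (weighted_pairs P N)"
proof -
  note bij = encode_bij[of P, OF P3]
  have "{x \<in> bipartitions P \<times> bipartitions P. encode x \<in> distinct_partitions (copies P) N}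
      = weighted_pairs P N"
  proof (intro set_eqI iffI)
    fix x assume "x \<in> {x \<in> bipartitions P \<times> bipartitions P. encode x \<in> distinct_partitions (copies P) N}"
    then show "x \<in> weighted_pairs P N"
      using sum_encode by (fastforce simp: distinct_partitions_def weighted_pairs_def bipartitions_def)
  next
    fix x assume x: "x \<in> weighted_pairs P N"
    then have "x \<in> bipartitions P \<times> bipartitions P" by (auto simp: weighted_pairs_def)
    then have "encode x \<subseteq> copies P" "finite (encode x)" using bij_betwE[OF bij] by auto
    then show "x \<in> {x \<in> bipartitions P \<times> bipartitions P. encode x \<in> distinct_partitions (copies P) N}"
      using x sum_encode by (fastforce simp: distinct_partitions_def weighted_pairs_def bipartitions_def)
  qed
  moreover have "card {x \<in> bipartitions P \<times> bipartitions P. encode x \<in> distinct_partitions (copies P) N}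
      = card (distinct_partitions (copies P) N)"
    by (rule card_preimage_bij[OF bij]) (auto simp: distinct_partitions_def)
  ultimately show ?thesis by simp
qed

lemma odd_pairs_doubling:
  assumes "odd N"
  shows "2 * card (weighted_pairs odd N)
       = card {(p1, p2) \<in> bipartitions odd \<times> bipartitions odd. energy p1 + 3 * energy p2 = int N - 1}"
    (is "_ = card ?E")
proof -
  let ?G = "\<lambda>(p1, p2). ((charge p1, charge p2), (normal_form p1, normal_form p2))"
  define S where "S = {((j, k), (q1, q2)) \<in> UNIV \<times> (neutral \<times> neutral).
                        int (weight q1) + j\<^sup>2 + 3 * (int (weight q2) + k\<^sup>2) = int N}"
  define T where "T = {((a, c), (q1, q2)) \<in> UNIV \<times> (neutral \<times> neutral).
                        int (weight q1) + (a\<^sup>2 + a) + 3 * (int (weight q2) + (c\<^sup>2 + c)) = int N - 1}"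
  have memb: "?G (p1, p2) \<in> S \<longleftrightarrow> (p1, p2) \<in> weighted_pairs odd N"
    "?G (p1, p2) \<in> T \<longleftrightarrow> (p1, p2) \<in> ?E"
    if p: "p1 \<in> bipartitions odd" "p2 \<in> bipartitions odd" for p1 p2
  proof -
    have "weight p1 + 3 * weight p2 = N \<longleftrightarrow> int (weight p1) + 3 * int (weight p2) = int N"
      by linarith
    then show "?G (p1, p2) \<in> S \<longleftrightarrow> (p1, p2) \<in> weighted_pairs odd N"
      using p normal_form[OF p(1)] normal_form[OF p(2)] by (simp add: S_def weighted_pairs_def)
    show "?G (p1, p2) \<in> T \<longleftrightarrow> (p1, p2) \<in> ?E"
      using p normal_form[OF p(1)] normal_form[OF p(2)] by (simp add: T_def energy_def algebra_simps)
  qed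
  have "{x \<in> bipartitions odd \<times> bipartitions odd. ?G x \<in> S} = weighted_pairs odd N"
    and "{x \<in> bipartitions odd \<times> bipartitions odd. ?G x \<in> T} = ?E"
    using memb by (auto simp: weighted_pairs_def)
  then have "card (weighted_pairs odd N) = card S" and "card ?E = card T"
    using card_preimage_bij[OF charge_decomposition, of S] card_preimage_bij[OF charge_decomposition, of T]
    by (auto simp: S_def T_def)
  then show ?thesis
    using neutral_representations_doubling[of "int N"] assms unfolding S_def T_def by simp
qed

lemma S_partition_parity:
  assumes "Q \<in> distinct_partitions S_elems N"
  shows "even (card Q) \<longleftrightarrow> even N"
proof -
  have "finite Q" "\<forall>x\<in>Q. odd (fst x)" "(\<Sum>x\<in>Q. fst x) = N"
    using assms by (auto simp: distinct_partitions_def S_elems_def)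
  then show ?thesis using sum_of_odd_parity[of Q fst] by simp
qed

lemma T_partition_parity:
  assumes "Q \<in> distinct_partitions T_elems N"
  shows "even N"
  using assms by (auto simp: distinct_partitions_def T_elems_def intro!: dvd_sum)

text \<open>For even \<open>N\<close> both sides vanish by parity.\<close>

theorem theorem3p6:
  fixes N :: nat
  assumes "N \<ge> 1"
  shows "D_S N = 2 * D_T (N - 1)"
proof (cases "odd N")
  case True
  have S: "S_elems = copies odd" and T: "T_elems = copies even"
    by (auto simp: S_elems_def T_elems_def copies_def)
  have "{Q \<in> distinct_partitions S_elems N. odd (card Q)} = distinct_partitions S_elems N"
    using S_partition_parity True by blast
  then have "D_S N = card (weighted_pairs odd N)"
    unfolding D_S_def S by (simp add: partitions_count)
  moreover have "D_T (N - 1) = card (weighted_pairs even (N - 1))"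
    unfolding D_T_def T by (simp add: partitions_count)
  moreover have "2 * card (weighted_pairs odd N) = 4 * card (weighted_pairs even (N - 1))"
    using odd_pairs_doubling[OF True] energy_pairs_count[of "N - 1"] assms by simp
  ultimately show ?thesis by simp
next
  case False
  moreover have "odd (N - 1)" using False assms by presburger
  ultimately have "{Q \<in> distinct_partitions S_elems N. odd (card Q)} = {}"
    and "distinct_partitions T_elems (N - 1) = {}"
    using S_partition_parity T_partition_parity by blast+
  then show ?thesis unfolding D_S_def D_T_def by (metis card.empty mult_0_right)
qed

end
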